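(* Let $\alpha>1$ and $n\ge0$ an integer. (1) $K_\alpha(x;n)$ is a rational function of $x$, smooth on $[0,+\infty)$, with $K_\alpha(x;n)=O(x)$ as $x\to0^+$ and $K_\alpha(x;n)=O(x^{-1})$ as $x\to+\infty$. (2) $K_\alpha(\frac{x}{y};n)=(-1)^nK_\alpha(\frac{y}{x};n)$ for all $x,y>0$. (3) There is a constant $C_n>0$ (depending on $n$ and $\alpha$) such that for all $x,y>0$: $\sup_{x>0}|K_\alpha(x;n)|\le C_n$; $\sup_{y>0}\left|\frac1yK_\alpha(\frac xy;n)\right|\le C_nx^{-1}$; $\sup_{y>0}\left|\frac{d}{dy}\left[\frac1yK_\alpha(\frac xy;n)\right]\right|\le C_nx^{-2}$; $\sup_{x>0}\left|\frac{d}{dy}\left[\frac1yK_\alpha(\frac xy;n)\right]\right|\le C_ny^{-2}$.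
   Context: $K_\alpha(x)=\frac{\sin(\frac{2\pi}{1+\alpha})}{\pi}\frac{x}{1+x^2-2x\cos(\frac{2\pi}{1+\alpha})}$, $D_x=x\frac{d}{dx}$, and $K_\alpha(x;n)=D_x^nK_\alpha(x)$ (with $D_x^0$ the identity). *)

theory Defs
  imports "HOL-Analysis.Analysis" "HOL-Library.Landau_Symbols"
    "HOL-Computational_Algebra.Polynomial"
begin

definition K :: "real \<Rightarrow> real \<Rightarrow> real" where
  "K \<alpha> x = sin (2 * pi / (1 + \<alpha>)) / pi * x / (1 + x\<^sup>2 - 2 * x * cos (2 * pi / (1 + \<alpha>)))"

fun Kn :: "real \<Rightarrow> nat \<Rightarrow> real \<Rightarrow> real" where
  "Kn \<alpha> 0 = K \<alpha>"
| "Kn \<alpha> (Suc n) = (\<lambda>x. x * deriv (Kn \<alpha> n) x)"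

definition smooth_on :: "real set \<Rightarrow> (real \<Rightarrow> real) \<Rightarrow> bool" where
  "smooth_on S f \<longleftrightarrow> (\<exists>g :: nat \<Rightarrow> real \<Rightarrow> real. g 0 = f \<and>
      (\<forall>m. \<forall>x\<in>S. (g m has_real_derivative g (Suc m) x) (at x within S)))"

end

(* With Q(x) = 1 + x^2 - 2 x cos(2 pi/(1+alpha)), which has no real zero for alpha > 1, the
   functions A(x)/Q(x)^k (A a polynomial) are smooth and closed under sums, multiplication by x
   and differentiation.  By induction K(x;n) = x h_n(x) with h_n of this form and
   h_(n+1) = h_n + x h_n'.  Under t -> 1/t the operator D_x changes sign, so
   K(1/t;n) = (-1)^n K(t;n).  On [0,1] continuity of h_n and h_n' gives |K(t;n)| <= M t and
   |K(t;n+1) - K(t;n)| = t^2 |h_n'(t)| <= M t^2; inversion carries these to t >= 1, so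
   |K(t;n)| <= C min(t, 1/t) and |K(t;n+1) + K(t;n)| <= C min(1, 1/t^2).  Since
   d/dy [K(x/y;n)/y] = -(K(x/y;n+1) + K(x/y;n))/y^2, the remaining bounds follow by scaling. *)
theory Submission
  imports Defs
begin

definition rational_over :: "real poly \<Rightarrow> (real \<Rightarrow> real) \<Rightarrow> bool" where
  "rational_over Q f \<longleftrightarrow> (\<exists>A k. f = (\<lambda>x. poly A x / poly Q x ^ k))"

lemma has_real_derivative_poly_div_power:
  assumes "poly Q x \<noteq> 0"
  shows "((\<lambda>x. poly A x / poly Q x ^ k) has_real_derivative
          poly (pderiv A * Q - smult (of_nat k) (A * pderiv Q)) x / poly Q x ^ Suc k) (at x)"
proof -
  have "((\<lambda>x. poly A x / poly Q x ^ k) has_real_derivative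
      (poly (pderiv A) x * poly Q x ^ k - poly A x * (of_nat k * poly Q x ^ (k - 1) * poly (pderiv Q) x))
        / (poly Q x ^ k * poly Q x ^ k)) (at x)"
    using assms by (intro derivative_eq_intros poly_DERIV) auto
  moreover have "(poly (pderiv A) x * poly Q x ^ k - poly A x * (of_nat k * poly Q x ^ (k - 1) * poly (pderiv Q) x))
        / (poly Q x ^ k * poly Q x ^ k)
      = poly (pderiv A * Q - smult (of_nat k) (A * pderiv Q)) x / poly Q x ^ Suc k"
    using assms by (cases k) (simp_all add: field_simps)
  ultimately show ?thesis by simp
qed

lemma rational_over_has_real_derivative:
  assumes "\<And>x. poly Q x \<noteq> 0" and "rational_over Q f"
  shows "(f has_real_derivative deriv f x) (at x)"
  using assms has_real_derivative_poly_div_power DERIV_imp_deriv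
  unfolding rational_over_def by metis

lemma rational_over_deriv:
  assumes "\<And>x. poly Q x \<noteq> 0" and "rational_over Q f"
  shows "rational_over Q (deriv f)"
proof -
  obtain A k where f: "f = (\<lambda>x. poly A x / poly Q x ^ k)"
    using assms(2) unfolding rational_over_def by blast
  have "deriv f = (\<lambda>x. poly (pderiv A * Q - smult (of_nat k) (A * pderiv Q)) x / poly Q x ^ Suc k)"
    using has_real_derivative_poly_div_power[OF assms(1)] DERIV_imp_deriv unfolding f by blast
  then show ?thesis unfolding rational_over_def by blast
qed

lemma rational_over_add:
  assumes "\<And>x. poly Q x \<noteq> 0" and "rational_over Q f" and "rational_over Q g"
  shows "rational_over Q (\<lambda>x. f x + g x)"
proof -
  obtain A k B j where f: "f = (\<lambda>x. poly A x / poly Q x ^ k)" and g: "g = (\<lambda>x. poly B x / poly Q x ^ j)"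
    using assms(2,3) unfolding rational_over_def by blast
  have "(\<lambda>x. f x + g x) = (\<lambda>x. poly (A * Q ^ j + B * Q ^ k) x / poly Q x ^ (k + j))"
    using assms(1) by (simp add: f g poly_power field_simps power_add)
  then show ?thesis unfolding rational_over_def by blast
qed

lemma rational_over_mult_id:
  assumes "rational_over Q f"
  shows "rational_over Q (\<lambda>x. x * f x)"
proof -
  obtain A k where f: "f = (\<lambda>x. poly A x / poly Q x ^ k)"
    using assms unfolding rational_over_def by blast
  have "(\<lambda>x. x * f x) = (\<lambda>x. poly (pCons 0 A) x / poly Q x ^ k)"
    by (simp add: f)
  then show ?thesis unfolding rational_over_def by blast
qed

lemma rational_over_continuous_on:
  assumes "\<And>x. poly Q x \<noteq> 0" and "rational_over Q f"
  shows "continuous_on S f"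
  using rational_over_has_real_derivative[OF assms]
  by (meson DERIV_isCont continuous_at_imp_continuous_on)

lemma rational_over_smooth_on:
  assumes "\<And>x. poly Q x \<noteq> 0" and "rational_over Q f"
  shows "smooth_on S f"
  unfolding smooth_on_def
proof (intro exI[of _ "\<lambda>m. (deriv ^^ m) f"] conjI allI ballI)
  fix m x
  have "rational_over Q ((deriv ^^ m) f)"
    by (induction m) (simp_all add: assms rational_over_deriv)
  then show "((deriv ^^ m) f has_real_derivative (deriv ^^ Suc m) f x) (at x within S)"
    by (simp add: has_field_derivative_at_within rational_over_has_real_derivative[OF assms(1)])
qed simp

definition K_denom :: "real \<Rightarrow> real poly" where
  "K_denom \<alpha> = [:1, - 2 * cos (2 * pi / (1 + \<alpha>)), 1:]"

lemma poly_K_denom: "poly (K_denom \<alpha>) x = 1 + x\<^sup>2 - 2 * x * cos (2 * pi / (1 + \<alpha>))"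
  by (simp add: K_denom_def power2_eq_square algebra_simps)

lemma poly_K_denom_pos:
  assumes "\<alpha> > 1"
  shows "poly (K_denom \<alpha>) x > 0"
proof -
  define \<theta> where "\<theta> = 2 * pi / (1 + \<alpha>)"
  have "0 < \<theta>" "\<theta> < pi"
    using assms by (simp_all add: \<theta>_def divide_simps)
  then have "sin \<theta> > 0" by (rule sin_gt_zero)
  moreover have "poly (K_denom \<alpha>) x = (x - cos \<theta>)\<^sup>2 + (sin \<theta>)\<^sup>2"
    using sin_cos_squared_add[of \<theta>]
    by (simp add: poly_K_denom \<theta>_def power2_eq_square algebra_simps)
  ultimately show ?thesis
    by (simp add: add_nonneg_pos)
qed

lemma poly_K_denom_nonzero: "\<alpha> > 1 \<Longrightarrow> poly (K_denom \<alpha>) x \<noteq> 0"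
  using poly_K_denom_pos by (metis less_irrefl)

lemma Kn_Suc_eq_mult:
  assumes "Kn \<alpha> n = (\<lambda>x. x * h x)" and "\<And>x. (h has_real_derivative deriv h x) (at x)"
  shows "Kn \<alpha> (Suc n) = (\<lambda>x. x * (h x + x * deriv h x))"
proof
  fix x
  have "((\<lambda>x. x * h x) has_real_derivative 1 * h x + x * deriv h x) (at x)"
    using assms(2) by (intro derivative_eq_intros) auto
  then show "Kn \<alpha> (Suc n) x = x * (h x + x * deriv h x)"
    using assms(1) by (simp add: DERIV_imp_deriv)
qed

lemma Kn_eq_mult_rational:
  assumes "\<alpha> > 1"
  shows "\<exists>h. rational_over (K_denom \<alpha>) h \<and> Kn \<alpha> n = (\<lambda>x. x * h x)"
proof (induction n)
  case 0
  have "Kn \<alpha> 0 = (\<lambda>x. x * (poly [:sin (2 * pi / (1 + \<alpha>)) / pi:] x / poly (K_denom \<alpha>) x ^ 1))"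
    by (simp add: K_def poly_K_denom fun_eq_iff)
  then show ?case unfolding rational_over_def by blast
next
  case (Suc n)
  then obtain h where h: "rational_over (K_denom \<alpha>) h" "Kn \<alpha> n = (\<lambda>x. x * h x)"
    by blast
  note Q = poly_K_denom_nonzero[OF assms]
  have "Kn \<alpha> (Suc n) = (\<lambda>x. x * (h x + x * deriv h x))"
    using h(2) rational_over_has_real_derivative[OF Q h(1)] by (rule Kn_Suc_eq_mult)
  moreover have "rational_over (K_denom \<alpha>) (\<lambda>x. h x + x * deriv h x)"
    using Q h(1) by (intro rational_over_add rational_over_mult_id rational_over_deriv)
  ultimately show ?case by blast
qed

lemma rational_over_Kn: "\<alpha> > 1 \<Longrightarrow> rational_over (K_denom \<alpha>) (Kn \<alpha> n)"
  using Kn_eq_mult_rational rational_over_mult_id by metis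

lemma Kn_has_real_derivative:
  assumes "\<alpha> > 1"
  shows "(Kn \<alpha> n has_real_derivative deriv (Kn \<alpha> n) x) (at x)"
  using rational_over_has_real_derivative[OF poly_K_denom_nonzero[OF assms] rational_over_Kn[OF assms]] .

lemma Kn_poly_quotient:
  assumes "\<alpha> > 1"
  shows "\<exists>p q :: real poly. q \<noteq> 0 \<and> (\<forall>x. poly q x \<noteq> 0 \<and> Kn \<alpha> n x = poly p x / poly q x)"
proof -
  obtain A k where "Kn \<alpha> n = (\<lambda>x. poly A x / poly (K_denom \<alpha>) x ^ k)"
    using rational_over_Kn[OF assms] unfolding rational_over_def by blast
  moreover have "poly (K_denom \<alpha> ^ k) x \<noteq> 0" for x
    using poly_K_denom_nonzero[OF assms] by (simp add: poly_power)
  ultimately show ?thesis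
    by (metis poly_0 poly_power)
qed

lemma Kn_inverse:
  assumes "\<alpha> > 1" and "t > 0"
  shows "Kn \<alpha> n (1 / t) = (-1) ^ n * Kn \<alpha> n t"
  using assms(2)
proof (induction n arbitrary: t)
  case 0
  have K: "K \<alpha> x = sin (2 * pi / (1 + \<alpha>)) / pi * x / poly (K_denom \<alpha>) x" for x
    by (simp add: K_def poly_K_denom)
  have "poly (K_denom \<alpha>) (1 / t) = poly (K_denom \<alpha>) t / t\<^sup>2"
    using 0 by (simp add: poly_K_denom field_simps power2_eq_square)
  then have "Kn \<alpha> 0 (1 / t) = sin (2 * pi / (1 + \<alpha>)) / pi * (1 / t) / (poly (K_denom \<alpha>) t / t\<^sup>2)"
    by (simp only: Kn.simps K)
  also have "\<dots> = sin (2 * pi / (1 + \<alpha>)) / pi * t / poly (K_denom \<alpha>) t"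
    using 0 poly_K_denom_nonzero[OF assms(1), of t] by (simp add: field_simps power2_eq_square)
  finally show ?case
    by (simp add: K)
next
  case (Suc n)
  \<comment> \<open>the induction hypothesis holds on the open set t > 0, so it may be differentiated\<close>
  have "((\<lambda>s. Kn \<alpha> n (1 / s)) has_real_derivative deriv (Kn \<alpha> n) (1 / t) * (- 1 / t\<^sup>2)) (at t)"
    using Suc.prems
    by (intro derivative_eq_intros DERIV_chain2[OF Kn_has_real_derivative[OF assms(1)]])
       (auto simp: field_simps power2_eq_square)
  then have "((\<lambda>s. (-1) ^ n * Kn \<alpha> n s) has_real_derivative deriv (Kn \<alpha> n) (1 / t) * (- 1 / t\<^sup>2)) (at t)"
    using has_field_derivative_transform_within_open[of _ _ t "{0<..}"] Suc.IH Suc.prems by auto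
  moreover have "((\<lambda>s. (-1) ^ n * Kn \<alpha> n s) has_real_derivative (-1) ^ n * deriv (Kn \<alpha> n) t) (at t)"
    by (rule DERIV_cmult[OF Kn_has_real_derivative[OF assms(1)]])
  ultimately have "deriv (Kn \<alpha> n) (1 / t) * (- 1 / t\<^sup>2) = (-1) ^ n * deriv (Kn \<alpha> n) t"
    by (rule DERIV_unique)
  then show ?case
    using Suc.prems by (simp add: field_simps power2_eq_square)
qed

lemma Kn_bounds_unit_interval:
  assumes "\<alpha> > 1"
  shows "\<exists>M>0. \<forall>t\<in>{0<..1}. \<bar>Kn \<alpha> n t\<bar> \<le> M * t \<and> \<bar>Kn \<alpha> (Suc n) t + Kn \<alpha> n t\<bar> \<le> M
           \<and> \<bar>Kn \<alpha> (Suc n) t - Kn \<alpha> n t\<bar> \<le> M * t\<^sup>2"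
proof -
  note Q = poly_K_denom_nonzero[OF assms]
  obtain h where h: "rational_over (K_denom \<alpha>) h" "Kn \<alpha> n = (\<lambda>x. x * h x)"
    using Kn_eq_mult_rational[OF assms] by blast
  have Kn_Suc: "Kn \<alpha> (Suc n) = (\<lambda>x. x * (h x + x * deriv h x))"
    using h(2) rational_over_has_real_derivative[OF Q h(1)] by (rule Kn_Suc_eq_mult)
  have "continuous_on {0..1} (\<lambda>u. \<bar>h u\<bar> + \<bar>deriv h u\<bar>)"
    using Q h(1) by (intro continuous_intros rational_over_continuous_on rational_over_deriv)
  then have "bounded ((\<lambda>u. \<bar>h u\<bar> + \<bar>deriv h u\<bar>) ` {0..1})"
    by (intro compact_imp_bounded compact_continuous_image compact_Icc)
  then obtain B where "B > 0" and B: "\<And>u. u \<in> {0..1} \<Longrightarrow> \<bar>h u\<bar> + \<bar>deriv h u\<bar> \<le> B"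
    unfolding bounded_pos by force
  have "\<bar>Kn \<alpha> n t\<bar> \<le> 3 * B * t \<and> \<bar>Kn \<alpha> (Suc n) t + Kn \<alpha> n t\<bar> \<le> 3 * B
      \<and> \<bar>Kn \<alpha> (Suc n) t - Kn \<alpha> n t\<bar> \<le> 3 * B * t\<^sup>2" if t: "t \<in> {0<..1}" for t
  proof -
    have hB: "\<bar>h t\<bar> \<le> B" "\<bar>deriv h t\<bar> \<le> B"
      using B[of t] t by auto
    have "\<bar>Kn \<alpha> n t\<bar> = t * \<bar>h t\<bar>"
      using t by (simp add: h(2) abs_mult)
    also have "\<dots> \<le> t * (3 * B)"
      using t hB \<open>B > 0\<close> by (intro mult_left_mono) auto
    finally have 1: "\<bar>Kn \<alpha> n t\<bar> \<le> 3 * B * t"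
      by (simp add: mult.commute)
    have "Kn \<alpha> (Suc n) t + Kn \<alpha> n t = t * (2 * h t + t * deriv h t)"
      unfolding Kn_Suc h(2) by (simp add: algebra_simps)
    then have "\<bar>Kn \<alpha> (Suc n) t + Kn \<alpha> n t\<bar> = t * \<bar>2 * h t + t * deriv h t\<bar>"
      using t by (simp add: abs_mult)
    also have "\<dots> \<le> 1 * (2 * \<bar>h t\<bar> + 1 * \<bar>deriv h t\<bar>)"
      using t by (intro mult_mono add_mono order_trans[OF abs_triangle_ineq]) (auto simp: abs_mult mult_left_le_one_le)
    finally have 2: "\<bar>Kn \<alpha> (Suc n) t + Kn \<alpha> n t\<bar> \<le> 3 * B"
      using hB by simp
    have "\<bar>Kn \<alpha> (Suc n) t - Kn \<alpha> n t\<bar> = t\<^sup>2 * \<bar>deriv h t\<bar>"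
      unfolding Kn_Suc h(2) by (simp add: abs_mult algebra_simps power2_eq_square)
    also have "\<dots> \<le> t\<^sup>2 * (3 * B)"
      using hB \<open>B > 0\<close> by (intro mult_left_mono) auto
    finally have 3: "\<bar>Kn \<alpha> (Suc n) t - Kn \<alpha> n t\<bar> \<le> 3 * B * t\<^sup>2"
      by (simp add: mult.commute)
    from 1 2 3 show ?thesis by blast
  qed
  with \<open>B > 0\<close> show ?thesis
    by (intro exI[of _ "3 * B"]) auto
qed

lemma Kn_bound:
  assumes "\<alpha> > 1"
  shows "\<exists>C>0. \<forall>t>0. \<bar>Kn \<alpha> n t\<bar> \<le> C * min t (1 / t)"
proof -
  obtain M where "M > 0" and M: "\<And>t. t \<in> {0<..1} \<Longrightarrow> \<bar>Kn \<alpha> n t\<bar> \<le> M * t"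
    using Kn_bounds_unit_interval[OF assms, of n] by blast
  have "\<bar>Kn \<alpha> n t\<bar> \<le> M * min t (1 / t)" if "t > 0" for t
  proof (cases "t \<le> 1")
    case True
    then have "t \<le> 1 / t"
      using that by (simp add: field_simps mult_le_one)
    then show ?thesis
      using M[of t] True that by (simp add: min_absorb1)
  next
    case False
    have "\<bar>Kn \<alpha> n t\<bar> = \<bar>Kn \<alpha> n (1 / t)\<bar>"
      using Kn_inverse[OF assms, of "1 / t" n] that by (simp add: abs_mult power_abs)
    also have "\<dots> \<le> M * (1 / t)"
      using M[of "1 / t"] False that by simp
    moreover have "1 / t \<le> t"
      using False by (smt (verit) divide_le_eq_1)
    ultimately show ?thesis
      by (simp add: min_absorb2)
  qed
  with \<open>M > 0\<close> show ?thesis by blast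
qed

lemma Kn_Suc_add_bound:
  assumes "\<alpha> > 1"
  shows "\<exists>C>0. \<forall>t>0. \<bar>Kn \<alpha> (Suc n) t + Kn \<alpha> n t\<bar> \<le> C * min 1 (1 / t\<^sup>2)"
proof -
  obtain M where "M > 0" and M: "\<And>t. t \<in> {0<..1} \<Longrightarrow>
      \<bar>Kn \<alpha> (Suc n) t + Kn \<alpha> n t\<bar> \<le> M \<and> \<bar>Kn \<alpha> (Suc n) t - Kn \<alpha> n t\<bar> \<le> M * t\<^sup>2"
    using Kn_bounds_unit_interval[OF assms, of n] by blast
  have "\<bar>Kn \<alpha> (Suc n) t + Kn \<alpha> n t\<bar> \<le> M * min 1 (1 / t\<^sup>2)" if "t > 0" for t
  proof (cases "t \<le> 1")
    case True
    then have "1 \<le> 1 / t\<^sup>2"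
      using that by (simp add: field_simps power_le_one)
    then show ?thesis
      using M[of t] True that by (simp add: min_absorb1)
  next
    case False
    \<comment> \<open>the inversion t \<mapsto> 1/t flips the relative sign of consecutive Kn\<close>
    have "Kn \<alpha> (Suc n) t + Kn \<alpha> n t = (-1) ^ Suc n * (Kn \<alpha> (Suc n) (1 / t) - Kn \<alpha> n (1 / t))"
      using Kn_inverse[OF assms, of "1 / t" n] Kn_inverse[OF assms, of "1 / t" "Suc n"] that
      by (simp add: algebra_simps)
    then have "\<bar>Kn \<alpha> (Suc n) t + Kn \<alpha> n t\<bar> = \<bar>Kn \<alpha> (Suc n) (1 / t) - Kn \<alpha> n (1 / t)\<bar>"
      by (simp add: abs_mult power_abs)
    also have "\<dots> \<le> M * (1 / t)\<^sup>2"
      using M[of "1 / t"] False that by simp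
    finally show ?thesis
      using False that by (simp add: min_absorb2 field_simps power_le_one)
  qed
  with \<open>M > 0\<close> show ?thesis by blast
qed

lemma Kn_bigo_at_right_0:
  assumes "\<alpha> > 1"
  shows "Kn \<alpha> n \<in> O[at_right 0](\<lambda>x. x)"
proof -
  obtain C where "C > 0" and C: "\<And>t. t > 0 \<Longrightarrow> \<bar>Kn \<alpha> n t\<bar> \<le> C * min t (1 / t)"
    using Kn_bound[OF assms, of n] by blast
  have "\<forall>\<^sub>F t in at_right 0. t > 0"
    by (simp add: eventually_at_filter)
  then have "\<forall>\<^sub>F t in at_right 0. norm (Kn \<alpha> n t) \<le> C * norm t"
  proof eventually_elim
    case (elim t)
    have "C * min t (1 / t) \<le> C * t"
      using \<open>C > 0\<close> by (intro mult_left_mono) auto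
    then show ?case
      using C[OF elim] elim by simp
  qed
  then show ?thesis
    by (rule bigoI)
qed

lemma Kn_bigo_at_top:
  assumes "\<alpha> > 1"
  shows "Kn \<alpha> n \<in> O[at_top](\<lambda>x. 1 / x)"
proof -
  obtain C where "C > 0" and C: "\<And>t. t > 0 \<Longrightarrow> \<bar>Kn \<alpha> n t\<bar> \<le> C * min t (1 / t)"
    using Kn_bound[OF assms, of n] by blast
  have "\<forall>\<^sub>F t in at_top. norm (Kn \<alpha> n t) \<le> C * norm (1 / t)"
    using eventually_gt_at_top[of 0]
  proof eventually_elim
    case (elim t)
    have "C * min t (1 / t) \<le> C * (1 / t)"
      using \<open>C > 0\<close> by (intro mult_left_mono) auto
    then show ?case
      using C[OF elim] elim by simp
  qed
  then show ?thesis
    by (rule bigoI)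
qed

lemma deriv_Kn_div:
  assumes "\<alpha> > 1" and "y \<noteq> 0"
  shows "deriv (\<lambda>t. Kn \<alpha> n (x / t) / t) y = - (Kn \<alpha> (Suc n) (x / y) + Kn \<alpha> n (x / y)) / y\<^sup>2"
proof -
  have "((\<lambda>t. Kn \<alpha> n (x / t)) has_real_derivative deriv (Kn \<alpha> n) (x / y) * (- x / y\<^sup>2)) (at y)"
    using assms(2)
    by (intro derivative_eq_intros DERIV_chain2[OF Kn_has_real_derivative[OF assms(1)]])
       (auto simp: field_simps power2_eq_square)
  then have "((\<lambda>t. Kn \<alpha> n (x / t) / t) has_real_derivative
      (deriv (Kn \<alpha> n) (x / y) * (- x / y\<^sup>2) * y - Kn \<alpha> n (x / y) * 1) / (y * y)) (at y)"
    using assms(2) by (intro DERIV_divide DERIV_ident)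
  moreover have "(deriv (Kn \<alpha> n) (x / y) * (- x / y\<^sup>2) * y - Kn \<alpha> n (x / y) * 1) / (y * y)
      = - (Kn \<alpha> (Suc n) (x / y) + Kn \<alpha> n (x / y)) / y\<^sup>2"
    using assms(2) by (simp add: field_simps power2_eq_square)
  ultimately show ?thesis
    by (simp add: DERIV_imp_deriv)
qed

lemma Kn_bounded:
  assumes "\<alpha> > 1"
  shows "\<exists>C>0. \<forall>t>0. \<bar>Kn \<alpha> n t\<bar> \<le> C \<and> t * \<bar>Kn \<alpha> n t\<bar> \<le> C"
proof -
  obtain C where "C > 0" and C: "\<And>t. t > 0 \<Longrightarrow> \<bar>Kn \<alpha> n t\<bar> \<le> C * min t (1 / t)"
    using Kn_bound[OF assms, of n] by blast
  have "\<bar>Kn \<alpha> n t\<bar> \<le> C \<and> t * \<bar>Kn \<alpha> n t\<bar> \<le> C" if "t > 0" for t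
  proof -
    have "min t (1 / t) \<le> 1"
      using that by (auto simp: min_le_iff_disj divide_le_eq_1)
    moreover have "t * min t (1 / t) \<le> t * (1 / t)"
      using that by (intro mult_left_mono) auto
    ultimately have "C * min t (1 / t) \<le> C" "C * (t * min t (1 / t)) \<le> C"
      using that \<open>C > 0\<close> by (simp_all add: mult_le_cancel_left1)
    moreover have "t * \<bar>Kn \<alpha> n t\<bar> \<le> t * (C * min t (1 / t))"
      using C[OF that] that by (intro mult_left_mono) auto
    ultimately show ?thesis
      using C[OF that] by (auto simp: mult.left_commute)
  qed
  with \<open>C > 0\<close> show ?thesis by blast
qed

lemma Kn_Suc_add_bounded:
  assumes "\<alpha> > 1"
  shows "\<exists>C>0. \<forall>t>0. \<bar>Kn \<alpha> (Suc n) t + Kn \<alpha> n t\<bar> \<le> C \<and> t\<^sup>2 * \<bar>Kn \<alpha> (Suc n) t + Kn \<alpha> n t\<bar> \<le> C"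
proof -
  obtain C where "C > 0"
    and C: "\<And>t. t > 0 \<Longrightarrow> \<bar>Kn \<alpha> (Suc n) t + Kn \<alpha> n t\<bar> \<le> C * min 1 (1 / t\<^sup>2)"
    using Kn_Suc_add_bound[OF assms, of n] by blast
  have "\<bar>Kn \<alpha> (Suc n) t + Kn \<alpha> n t\<bar> \<le> C \<and> t\<^sup>2 * \<bar>Kn \<alpha> (Suc n) t + Kn \<alpha> n t\<bar> \<le> C"
    if "t > 0" for t
  proof -
    have "t\<^sup>2 * min 1 (1 / t\<^sup>2) \<le> t\<^sup>2 * (1 / t\<^sup>2)"
      by (intro mult_left_mono) auto
    then have "C * min 1 (1 / t\<^sup>2) \<le> C" "C * (t\<^sup>2 * min 1 (1 / t\<^sup>2)) \<le> C"
      using that \<open>C > 0\<close> by (simp_all add: mult_le_cancel_left1)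
    moreover have "t\<^sup>2 * \<bar>Kn \<alpha> (Suc n) t + Kn \<alpha> n t\<bar> \<le> t\<^sup>2 * (C * min 1 (1 / t\<^sup>2))"
      using C[OF that] by (intro mult_left_mono) auto
    ultimately show ?thesis
      using C[OF that] by (auto simp: mult.left_commute)
  qed
  with \<open>C > 0\<close> show ?thesis by blast
qed

lemma Kn_scaled_bounds:
  assumes "\<alpha> > 1"
  shows "\<exists>C > 0.
            (\<forall>x > 0. \<bar>Kn \<alpha> n x\<bar> \<le> C)
          \<and> (\<forall>x > 0. \<forall>y > 0. \<bar>Kn \<alpha> n (x / y) / y\<bar> \<le> C / x)
          \<and> (\<forall>x > 0. \<forall>y > 0. \<bar>deriv (\<lambda>t. Kn \<alpha> n (x / t) / t) y\<bar> \<le> C / x\<^sup>2)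
          \<and> (\<forall>x > 0. \<forall>y > 0. \<bar>deriv (\<lambda>t. Kn \<alpha> n (x / t) / t) y\<bar> \<le> C / y\<^sup>2)"
proof -
  obtain C1 where "C1 > 0"
    and C1: "\<And>t. t > 0 \<Longrightarrow> \<bar>Kn \<alpha> n t\<bar> \<le> C1 \<and> t * \<bar>Kn \<alpha> n t\<bar> \<le> C1"
    using Kn_bounded[OF assms, of n] by blast
  obtain C2 where
    C2: "\<And>t. t > 0 \<Longrightarrow> \<bar>Kn \<alpha> (Suc n) t + Kn \<alpha> n t\<bar> \<le> C2 \<and> t\<^sup>2 * \<bar>Kn \<alpha> (Suc n) t + Kn \<alpha> n t\<bar> \<le> C2"
    using Kn_Suc_add_bounded[OF assms, of n] by blast
  define C where "C = max C1 C2"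
  have K1: "\<bar>Kn \<alpha> n t\<bar> \<le> C" "t * \<bar>Kn \<alpha> n t\<bar> \<le> C" if "t > 0" for t
    using C1[OF that] by (auto simp: C_def le_max_iff_disj)
  have K2: "\<bar>Kn \<alpha> (Suc n) t + Kn \<alpha> n t\<bar> \<le> C" "t\<^sup>2 * \<bar>Kn \<alpha> (Suc n) t + Kn \<alpha> n t\<bar> \<le> C"
    if "t > 0" for t
    using C2[OF that] by (auto simp: C_def le_max_iff_disj)
  have "\<bar>Kn \<alpha> n (x / y) / y\<bar> \<le> C / x"
    and "\<bar>deriv (\<lambda>t. Kn \<alpha> n (x / t) / t) y\<bar> \<le> C / x\<^sup>2"
    and "\<bar>deriv (\<lambda>t. Kn \<alpha> n (x / t) / t) y\<bar> \<le> C / y\<^sup>2" if "x > 0" "y > 0" for x y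
  proof -
    have xy: "x / y > 0" using that by simp
    have d: "\<bar>deriv (\<lambda>t. Kn \<alpha> n (x / t) / t) y\<bar> = \<bar>Kn \<alpha> (Suc n) (x / y) + Kn \<alpha> n (x / y)\<bar> / y\<^sup>2"
      using that by (simp add: deriv_Kn_div[OF assms] abs_divide del: Kn.simps)
    show "\<bar>Kn \<alpha> n (x / y) / y\<bar> \<le> C / x"
      using K1(2)[OF xy] that by (simp add: field_simps abs_divide)
    show "\<bar>deriv (\<lambda>t. Kn \<alpha> n (x / t) / t) y\<bar> \<le> C / x\<^sup>2"
      using K2(2)[OF xy] that unfolding d by (simp add: field_simps power_divide)
    show "\<bar>deriv (\<lambda>t. Kn \<alpha> n (x / t) / t) y\<bar> \<le> C / y\<^sup>2"
      using K2(1)[OF xy] that unfolding d by (simp add: divide_right_mono)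
  qed
  moreover have "C > 0"
    using \<open>C1 > 0\<close> by (simp add: C_def)
  ultimately show ?thesis
    using K1(1) by blast
qed

theorem lemma3p2:
  fixes \<alpha> :: real and n :: nat
  assumes "\<alpha> > 1"
  shows "(\<exists>p q :: real poly. q \<noteq> 0 \<and>
            (\<forall>x\<ge>0. poly q x \<noteq> 0 \<and> Kn \<alpha> n x = poly p x / poly q x))
       \<and> smooth_on {0..} (Kn \<alpha> n)
       \<and> Kn \<alpha> n \<in> O[at_right 0](\<lambda>x. x)
       \<and> Kn \<alpha> n \<in> O[at_top](\<lambda>x. 1 / x)
       \<and> (\<forall>x y. x > 0 \<longrightarrow> y > 0 \<longrightarrow> Kn \<alpha> n (x / y) = (-1) ^ n * Kn \<alpha> n (y / x))
       \<and> (\<exists>C > 0.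
            (\<forall>x > 0. \<bar>Kn \<alpha> n x\<bar> \<le> C)
          \<and> (\<forall>x > 0. \<forall>y > 0. \<bar>Kn \<alpha> n (x / y) / y\<bar> \<le> C / x)
          \<and> (\<forall>x > 0. \<forall>y > 0. \<bar>deriv (\<lambda>t. Kn \<alpha> n (x / t) / t) y\<bar> \<le> C / x\<^sup>2)
          \<and> (\<forall>x > 0. \<forall>y > 0. \<bar>deriv (\<lambda>t. Kn \<alpha> n (x / t) / t) y\<bar> \<le> C / y\<^sup>2))"
proof (intro conjI)
  show "\<exists>p q :: real poly. q \<noteq> 0 \<and> (\<forall>x\<ge>0. poly q x \<noteq> 0 \<and> Kn \<alpha> n x = poly p x / poly q x)"
    using Kn_poly_quotient[OF assms] by blast
  show "smooth_on {0..} (Kn \<alpha> n)"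
    using rational_over_smooth_on[OF poly_K_denom_nonzero[OF assms] rational_over_Kn[OF assms]] .
  show "\<forall>x y. x > 0 \<longrightarrow> y > 0 \<longrightarrow> Kn \<alpha> n (x / y) = (-1) ^ n * Kn \<alpha> n (y / x)"
    using Kn_inverse[OF assms] by (metis divide_pos_pos divide_divide_eq_right mult_1)
qed (use assms Kn_bigo_at_right_0 Kn_bigo_at_top Kn_scaled_bounds in auto)

end
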